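(* Let $(R,\mathfrak m)$ be a one-dimensional Cohen–Macaulay local ring. Let $I,J$ be regular trace ideals of $R$ with $J\subseteq I$ and $\ell_R(I/J)=2$. Assume that $I:I$ is a local ring and that there exists $q\in I\setminus J$ with $IJ=qJ$ and $I^2\ne qI$. Then the maximal ideal of $I:I$ is $q^{-1}J$.
   Context: $Q(R)$ is the total ring of fractions, $I:I=\{x\in Q(R)\mid xI\subseteq I\}$, and $\ell_R$ denotes length. An ideal is regular if it contains a non-zerodivisor; a trace ideal is an ideal of the form $\sum_{f\in\mathrm{Hom}_R(M,R)}\mathrm{Im}f$ for some $R$-module $M$. *)

theory Defs
  imports "HOL-Algebra.Ideal_Product" "HOL-Algebra.Module" "HOL-Algebra.Ring_Divisibility"
begin

definition nzd :: "('a, 'b) ring_scheme \<Rightarrow> 'a \<Rightarrow> bool" where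
  "nzd R s \<longleftrightarrow> s \<in> carrier R \<and> (\<forall>x\<in>carrier R. s \<otimes>\<^bsub>R\<^esub> x = \<zero>\<^bsub>R\<^esub> \<longrightarrow> x = \<zero>\<^bsub>R\<^esub>)"

definition regular_ideal :: "('a, 'b) ring_scheme \<Rightarrow> 'a set \<Rightarrow> bool" where
  "regular_ideal R I \<longleftrightarrow> ideal I R \<and> (\<exists>s\<in>I. nzd R s)"

text \<open>Q is (a copy of) the total ring of fractions of R: R is a subring of Q (same operations),
  every non-zerodivisor of R is a unit of Q, and every element of Q is a fraction r/s with s a
  non-zerodivisor of R.  This determines Q up to isomorphism over R.\<close>
definition total_ring_of_fractions :: "('a, 'b) ring_scheme \<Rightarrow> ('a, 'c) ring_scheme \<Rightarrow> bool" where
  "total_ring_of_fractions R Q \<longleftrightarrow>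
     cring Q \<and> carrier R \<subseteq> carrier Q \<and>
     (\<forall>x\<in>carrier R. \<forall>y\<in>carrier R. x \<oplus>\<^bsub>R\<^esub> y = x \<oplus>\<^bsub>Q\<^esub> y \<and> x \<otimes>\<^bsub>R\<^esub> y = x \<otimes>\<^bsub>Q\<^esub> y) \<and>
     \<zero>\<^bsub>R\<^esub> = \<zero>\<^bsub>Q\<^esub> \<and> \<one>\<^bsub>R\<^esub> = \<one>\<^bsub>Q\<^esub> \<and>
     (\<forall>s. nzd R s \<longrightarrow> s \<in> Units Q) \<and>
     (\<forall>x\<in>carrier Q. \<exists>r\<in>carrier R. \<exists>s. nzd R s \<and> x = r \<otimes>\<^bsub>Q\<^esub> inv\<^bsub>Q\<^esub> s)"

definition local_ring :: "('a, 'b) ring_scheme \<Rightarrow> bool" where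
  "local_ring R \<longleftrightarrow> cring R \<and> (\<exists>!m. maximalideal m R)"

definition max_ideal :: "('a, 'b) ring_scheme \<Rightarrow> 'a set" where
  "max_ideal R = (THE m. maximalideal m R)"

definition prime_chain :: "('a, 'b) ring_scheme \<Rightarrow> nat \<Rightarrow> bool" where
  "prime_chain R n \<longleftrightarrow> (\<exists>Ps :: 'a set list. length Ps = Suc n \<and>
      (\<forall>P\<in>set Ps. primeideal P R) \<and> (\<forall>i<n. Ps ! i \<subset> Ps ! Suc i))"

definition krull_dim_eq :: "('a, 'b) ring_scheme \<Rightarrow> nat \<Rightarrow> bool" where
  "krull_dim_eq R d \<longleftrightarrow> prime_chain R d \<and> \<not> prime_chain R (Suc d)"

definition regular_sequence :: "('a, 'b) ring_scheme \<Rightarrow> 'a list \<Rightarrow> bool" where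
  "regular_sequence R xs \<longleftrightarrow>
     (\<forall>i<length xs. xs ! i \<in> carrier R \<and>
        (\<forall>y\<in>carrier R. xs ! i \<otimes>\<^bsub>R\<^esub> y \<in> Idl\<^bsub>R\<^esub> (set (take i xs)) \<longrightarrow> y \<in> Idl\<^bsub>R\<^esub> (set (take i xs)))) \<and>
     Idl\<^bsub>R\<^esub> (set xs) \<noteq> carrier R"

definition depth_eq :: "('a, 'b) ring_scheme \<Rightarrow> nat \<Rightarrow> bool" where
  "depth_eq R d \<longleftrightarrow>
     (\<exists>xs. length xs = d \<and> set xs \<subseteq> max_ideal R \<and> regular_sequence R xs) \<and>
     \<not> (\<exists>xs. length xs = Suc d \<and> set xs \<subseteq> max_ideal R \<and> regular_sequence R xs)"

definition cohen_macaulay_local :: "('a, 'b) ring_scheme \<Rightarrow> bool" where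
  "cohen_macaulay_local R \<longleftrightarrow> noetherian_ring R \<and> local_ring R \<and>
     (\<exists>d. krull_dim_eq R d \<and> depth_eq R d)"

text \<open>Length of I/J (J \<subseteq> I ideals) equals n: a composition series of R-submodules of I/J,
  i.e. a chain of ideals J = K_0 \<subset> ... \<subset> K_n = I with no ideal strictly in between consecutive ones.\<close>
definition quotient_length_eq :: "('a, 'b) ring_scheme \<Rightarrow> 'a set \<Rightarrow> 'a set \<Rightarrow> nat \<Rightarrow> bool" where
  "quotient_length_eq R I J n \<longleftrightarrow> (\<exists>Ks :: 'a set list. length Ks = Suc n \<and>
      Ks ! 0 = J \<and> Ks ! n = I \<and> (\<forall>K\<in>set Ks. ideal K R) \<and>
      (\<forall>i<n. Ks ! i \<subset> Ks ! Suc i \<and>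
         \<not> (\<exists>K. ideal K R \<and> Ks ! i \<subset> K \<and> K \<subset> Ks ! Suc i)))"

definition linear_form :: "('a, 'b) ring_scheme \<Rightarrow> ('a, 'm) module \<Rightarrow> ('m \<Rightarrow> 'a) \<Rightarrow> bool" where
  "linear_form R M f \<longleftrightarrow> f \<in> carrier M \<rightarrow> carrier R \<and>
     (\<forall>x\<in>carrier M. \<forall>y\<in>carrier M. f (x \<oplus>\<^bsub>M\<^esub> y) = f x \<oplus>\<^bsub>R\<^esub> f y) \<and>
     (\<forall>a\<in>carrier R. \<forall>x\<in>carrier M. f (a \<odot>\<^bsub>M\<^esub> x) = a \<otimes>\<^bsub>R\<^esub> f x)"

definition trace_of :: "('a, 'b) ring_scheme \<Rightarrow> ('a, 'm) module \<Rightarrow> 'a set" where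
  "trace_of R M = Idl\<^bsub>R\<^esub> (\<Union>{f ` carrier M | f. linear_form R M f})"

definition colon :: "('a, 'c) ring_scheme \<Rightarrow> 'a set \<Rightarrow> 'a set" where
  "colon Q I = {x \<in> carrier Q. \<forall>a\<in>I. x \<otimes>\<^bsub>Q\<^esub> a \<in> I}"

end

(*
  Since IJ = qJ and I, J contain non-zerodivisors, q is a non-zerodivisor, hence a unit of Q.
  Because J is a trace ideal, every x in Q with xJ in R satisfies xJ in J; so (I:I)J is in J,
  and together with IJ = qJ this makes q^-1 J a proper ideal of S = I:I.  Multiplication by q
  maps ideals of S injectively to ideals of R, with q(q^-1 J) = J and qS a proper subideal
  of I (qS = I would give I^2 = qI).  A proper ideal N of S strictly containing q^-1 J would
  therefore produce a chain J < qN < qS < I, impossible because I/J has length 2.  Hence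
  q^-1 J is a maximal ideal of the local ring S, i.e. its maximal ideal.
*)
theory Submission
  imports Defs "HOL-Algebra.Subrings"
begin

lemma cring_idealI:
  fixes R (structure)
  assumes "cring R" and T: "T \<subseteq> carrier R" "\<zero> \<in> T"
    and add: "\<And>a b. a \<in> T \<Longrightarrow> b \<in> T \<Longrightarrow> a \<oplus> b \<in> T"
    and mult: "\<And>r a. r \<in> carrier R \<Longrightarrow> a \<in> T \<Longrightarrow> r \<otimes> a \<in> T"
  shows "ideal T R"
proof -
  interpret cring R by fact
  have "\<ominus> a \<in> T" if "a \<in> T" for a
    using mult[of "\<ominus> \<one>" a] that T(1) by (auto simp: l_minus)
  then have "subgroup T (add_monoid R)"
    using T add by (intro add.subgroupI) (auto simp: a_inv_def[symmetric])
  then show ?thesis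
    using mult T(1) by (intro idealI ring_axioms) (auto, metis m_comm subsetD)
qed

lemma nzd_mult:
  assumes "cring R" "nzd R a" "nzd R b"
  shows "nzd R (a \<otimes>\<^bsub>R\<^esub> b)"
proof -
  interpret cring R by fact
  show ?thesis
    using assms(2,3) unfolding nzd_def by (metis m_assoc m_closed)
qed

lemma nzd_factor:
  assumes "cring R" "a \<in> carrier R" "b \<in> carrier R" "nzd R (a \<otimes>\<^bsub>R\<^esub> b)"
  shows "nzd R a"
proof -
  interpret cring R by fact
  show ?thesis
    using assms(2-4) unfolding nzd_def by (metis m_assoc m_comm r_null)
qed

lemma nzd_if_ideal_prod_subset:
  assumes R: "cring R" and I: "regular_ideal R I" and J: "regular_ideal R J"
    and q: "q \<in> carrier R" and IJ: "I \<cdot>\<^bsub>R\<^esub> J \<subseteq> (\<lambda>j. q \<otimes>\<^bsub>R\<^esub> j) ` J"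
  shows "nzd R q"
proof -
  obtain t s where t: "t \<in> I" "nzd R t" and s: "s \<in> J" "nzd R s"
    using I J unfolding regular_ideal_def by blast
  obtain j where j: "j \<in> J" "t \<otimes>\<^bsub>R\<^esub> s = q \<otimes>\<^bsub>R\<^esub> j"
    using ideal_prod.prod[OF t(1) s(1)] IJ by auto
  have "j \<in> carrier R"
    using J j(1) ideal.Icarr unfolding regular_ideal_def by metis
  then show ?thesis
    using nzd_factor[OF R q] nzd_mult[OF R t(2) s(2)] j(2) by simp
qed

lemma (in abelian_group) set_add_modular:
  assumes A: "additive_subgroup A G" and B: "additive_subgroup B G"
    and K: "additive_subgroup K G" and AB: "A \<subseteq> B"
  shows "B \<inter> (A <+>\<^bsub>G\<^esub> K) = A <+>\<^bsub>G\<^esub> (B \<inter> K)"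
proof
  have carr: "A \<subseteq> carrier G" "K \<subseteq> carrier G"
    using A K by (simp_all add: additive_subgroup.a_subset)
  show "B \<inter> (A <+>\<^bsub>G\<^esub> K) \<subseteq> A <+>\<^bsub>G\<^esub> (B \<inter> K)"
  proof
    fix x assume "x \<in> B \<inter> (A <+>\<^bsub>G\<^esub> K)"
    then obtain a k where x: "x \<in> B" "x = a \<oplus> k" "a \<in> A" "k \<in> K"
      unfolding set_add_def' by blast
    have "a \<in> carrier G" "k \<in> carrier G"
      using x carr by auto
    then have "k = \<ominus> a \<oplus> x"
      using x(2) by (simp add: a_assoc[symmetric] l_neg)
    then have "k \<in> B"
      using x AB B by (metis additive_subgroup.a_closed additive_subgroup.a_inv_closed subsetD)
    then show "x \<in> A <+>\<^bsub>G\<^esub> (B \<inter> K)"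
      using x unfolding set_add_def' by blast
  qed
  show "A <+>\<^bsub>G\<^esub> (B \<inter> K) \<subseteq> B \<inter> (A <+>\<^bsub>G\<^esub> K)"
    using AB B unfolding set_add_def' by (auto intro: additive_subgroup.a_closed)
qed

lemma (in ring) ideal_set_add_upper:
  assumes "ideal X R" "ideal Y R"
  shows "X \<subseteq> X <+>\<^bsub>R\<^esub> Y" "Y \<subseteq> X <+>\<^bsub>R\<^esub> Y"
  using assms genideal_self[of "X \<union> Y"]
  by (auto simp: union_genideal ideal.axioms(1) additive_subgroup.a_subset)

lemma (in ring) ideal_set_add_least:
  assumes "ideal X R" "ideal Y R" "ideal Z R" "X \<subseteq> Z" "Y \<subseteq> Z"
  shows "X <+>\<^bsub>R\<^esub> Y \<subseteq> Z"
  using assms by (simp add: union_genideal[symmetric] genideal_minimal)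

lemma quotient_length_eq_twoE:
  assumes "quotient_length_eq R I J 2"
  obtains K where "ideal J R" "ideal K R" "ideal I R" "J \<subset> K" "K \<subset> I"
    and "\<And>L. ideal L R \<Longrightarrow> J \<subseteq> L \<Longrightarrow> L \<subseteq> K \<Longrightarrow> L = J \<or> L = K"
    and "\<And>L. ideal L R \<Longrightarrow> K \<subseteq> L \<Longrightarrow> L \<subseteq> I \<Longrightarrow> L = K \<or> L = I"
proof -
  obtain Ks :: "'a set list" where Ks: "length Ks = Suc 2" "Ks ! 0 = J" "Ks ! 2 = I"
    "\<forall>K\<in>set Ks. ideal K R"
    "\<forall>i<2. Ks ! i \<subset> Ks ! Suc i \<and> \<not> (\<exists>K. ideal K R \<and> Ks ! i \<subset> K \<and> K \<subset> Ks ! Suc i)"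
    using assms unfolding quotient_length_eq_def by blast
  have ideals: "ideal (Ks ! i) R" if "i \<le> 2" for i
    using Ks(1,4) that by simp
  have step0: "Ks ! 0 \<subset> Ks ! 1" "\<not> (\<exists>K. ideal K R \<and> Ks ! 0 \<subset> K \<and> K \<subset> Ks ! 1)"
    using Ks(5) by auto
  have step1: "Ks ! 1 \<subset> Ks ! 2" "\<not> (\<exists>K. ideal K R \<and> Ks ! 1 \<subset> K \<and> K \<subset> Ks ! 2)"
    using Ks(5) by (auto simp: numeral_2_eq_2)
  show thesis
  proof (rule that[of "Ks ! 1"])
    show "ideal J R" "ideal (Ks ! 1) R" "ideal I R"
      using ideals[of 0] ideals[of 1] ideals[of 2] Ks(2,3) by simp_all
    show "J \<subset> Ks ! 1" "Ks ! 1 \<subset> I"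
      using step0(1) step1(1) Ks(2,3) by simp_all
    show "L = J \<or> L = Ks ! 1" if "ideal L R" "J \<subseteq> L" "L \<subseteq> Ks ! 1" for L
      using step0(2) that Ks(2) by blast
    show "L = Ks ! 1 \<or> L = I" if "ideal L R" "Ks ! 1 \<subseteq> L" "L \<subseteq> I" for L
      using step1(2) that Ks(3) by blast
  qed
qed

text \<open>A Jordan--Hoelder argument: comparing \<open>A\<close> and \<open>B\<close> with the middle term \<open>K\<close> of a
  composition series, one finds \<open>A \<inter> K = B \<inter> K = J\<close> and \<open>A + K = I\<close>, so the modular law
  gives \<open>B = A + (B \<inter> K) = A\<close>.\<close>

lemma (in ring) quotient_length_eq_two_no_chain:
  assumes "quotient_length_eq R I J 2"
    and A: "ideal A R" and B: "ideal B R" and "J \<subset> A" "A \<subset> B" "B \<subset> I"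
  shows False
proof -
  obtain K where J: "ideal J R" and K: "ideal K R" and I: "ideal I R" and "J \<subset> K" "K \<subset> I"
    and JK: "\<And>L. ideal L R \<Longrightarrow> J \<subseteq> L \<Longrightarrow> L \<subseteq> K \<Longrightarrow> L = J \<or> L = K"
    and KI: "\<And>L. ideal L R \<Longrightarrow> K \<subseteq> L \<Longrightarrow> L \<subseteq> I \<Longrightarrow> L = K \<or> L = I"
    using assms(1) by (rule quotient_length_eq_twoE) blast
  have AK: "A \<inter> K = J"
  proof -
    have "A \<inter> K = J \<or> A \<inter> K = K"
      using JK[OF i_intersect[OF A K]] \<open>J \<subset> K\<close> assms(4) by blast
    moreover have "\<not> K \<subseteq> A"
      using KI[OF B] assms(5,6) by blast
    ultimately show ?thesis by blast
  qed
  have AK_sum: "A <+>\<^bsub>R\<^esub> K = I"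
  proof -
    have "A <+>\<^bsub>R\<^esub> K = K \<or> A <+>\<^bsub>R\<^esub> K = I"
      using KI[OF add_ideals[OF A K]] ideal_set_add_upper[OF A K] ideal_set_add_least[OF A K I]
        assms(5,6) \<open>K \<subset> I\<close> by blast
    moreover have "A <+>\<^bsub>R\<^esub> K \<noteq> K"
      using ideal_set_add_upper(1)[OF A K] AK assms(4) by blast
    ultimately show ?thesis by blast
  qed
  have BK: "B \<inter> K = J"
  proof -
    have "B \<inter> K = J \<or> B \<inter> K = K"
      using JK[OF i_intersect[OF B K]] \<open>J \<subset> K\<close> assms(4,5) by blast
    moreover have "\<not> K \<subseteq> B"
      using ideal_set_add_least[OF A K B] AK_sum assms(5,6) by blast
    ultimately show ?thesis by blast
  qed
  have "B = B \<inter> (A <+>\<^bsub>R\<^esub> K)"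
    using AK_sum assms(6) by blast
  also have "\<dots> = A <+>\<^bsub>R\<^esub> J"
    using set_add_modular[OF A[THEN ideal.axioms(1)] B[THEN ideal.axioms(1)] K[THEN ideal.axioms(1)]]
      assms(5) BK by simp
  also have "\<dots> \<subseteq> A"
    using ideal_set_add_least[OF A J A] assms(4) by blast
  finally show False
    using assms(5) by blast
qed

lemma (in ring) trace_of_ideal: "ideal (trace_of R M) R"
  unfolding trace_of_def linear_form_def by (rule genideal_ideal) blast

lemma (in monoid) image_mult_inv_mult_Units:
  assumes "u \<in> Units G" "X \<subseteq> carrier G"
  shows "(\<lambda>x. u \<otimes> x) ` (\<lambda>x. inv u \<otimes> x) ` X = X"
proof -
  have "u \<otimes> (inv u \<otimes> x) = x" if "x \<in> X" for x
    using assms that by (auto simp: m_assoc[symmetric] Units_closed)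
  then show ?thesis
    by (simp add: image_image cong: image_cong)
qed

text \<open>\<open>R\<close> and \<open>Q\<close> are different record types, so \<open>R\<close> cannot be written as a
  substructure \<open>Q\<lparr>carrier := _\<rparr>\<close>; instead the locale asks the operations to agree on
  \<open>carrier R\<close>.\<close>

locale ring_extension = R: cring R + Q: cring Q
  for R :: "('a, 'b) ring_scheme" and Q :: "('a, 'c) ring_scheme" +
  assumes carrier_subset: "carrier R \<subseteq> carrier Q"
    and add_eq [simp]: "x \<in> carrier R \<Longrightarrow> y \<in> carrier R \<Longrightarrow> x \<oplus>\<^bsub>R\<^esub> y = x \<oplus>\<^bsub>Q\<^esub> y"
    and mult_eq [simp]: "x \<in> carrier R \<Longrightarrow> y \<in> carrier R \<Longrightarrow> x \<otimes>\<^bsub>R\<^esub> y = x \<otimes>\<^bsub>Q\<^esub> y"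
    and zero_eq [simp]: "\<zero>\<^bsub>R\<^esub> = \<zero>\<^bsub>Q\<^esub>"
    and one_eq [simp]: "\<one>\<^bsub>R\<^esub> = \<one>\<^bsub>Q\<^esub>"

lemma total_ring_of_fractions_ring_extension:
  assumes "cring R" "total_ring_of_fractions R Q"
  shows "ring_extension R Q"
  using assms unfolding total_ring_of_fractions_def ring_extension_def ring_extension_axioms_def
  by blast

context ring_extension
begin

lemma carrier_in_Q [intro]: "x \<in> carrier R \<Longrightarrow> x \<in> carrier Q"
  using carrier_subset by blast

lemma a_inv_eq [simp]: "x \<in> carrier R \<Longrightarrow> \<ominus>\<^bsub>R\<^esub> x = \<ominus>\<^bsub>Q\<^esub> x"
  by (metis Q.minus_equality R.a_inv_closed R.l_neg add_eq carrier_in_Q zero_eq)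

lemma ideal_mult_preimage:
  assumes J: "ideal J R" and K: "ideal K R" and x: "x \<in> carrier Q"
  shows "ideal {a \<in> J. x \<otimes>\<^bsub>Q\<^esub> a \<in> K} R"
proof (rule cring_idealI[OF R.is_cring])
  have JR: "J \<subseteq> carrier R" and KR: "K \<subseteq> carrier R"
    using J K by (simp_all add: ideal.axioms(1) additive_subgroup.a_subset)
  show "{a \<in> J. x \<otimes>\<^bsub>Q\<^esub> a \<in> K} \<subseteq> carrier R"
    using JR by blast
  show "\<zero>\<^bsub>R\<^esub> \<in> {a \<in> J. x \<otimes>\<^bsub>Q\<^esub> a \<in> K}"
    using J K x additive_subgroup.zero_closed[OF ideal.axioms(1)] by force
  show "a \<oplus>\<^bsub>R\<^esub> b \<in> {a \<in> J. x \<otimes>\<^bsub>Q\<^esub> a \<in> K}"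
    if "a \<in> {a \<in> J. x \<otimes>\<^bsub>Q\<^esub> a \<in> K}" "b \<in> {a \<in> J. x \<otimes>\<^bsub>Q\<^esub> a \<in> K}" for a b
  proof -
    have "a \<in> carrier R" "b \<in> carrier R" "x \<otimes>\<^bsub>Q\<^esub> a \<in> carrier R" "x \<otimes>\<^bsub>Q\<^esub> b \<in> carrier R"
      using that JR KR by auto
    then have "x \<otimes>\<^bsub>Q\<^esub> (a \<oplus>\<^bsub>R\<^esub> b) = (x \<otimes>\<^bsub>Q\<^esub> a) \<oplus>\<^bsub>R\<^esub> (x \<otimes>\<^bsub>Q\<^esub> b)"
      using x by (simp add: Q.r_distr carrier_in_Q)
    then show ?thesis
      using that J K by (simp add: additive_subgroup.a_closed ideal.axioms(1))
  qed
  show "r \<otimes>\<^bsub>R\<^esub> a \<in> {a \<in> J. x \<otimes>\<^bsub>Q\<^esub> a \<in> K}"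
    if "r \<in> carrier R" "a \<in> {a \<in> J. x \<otimes>\<^bsub>Q\<^esub> a \<in> K}" for r a
  proof -
    have "a \<in> carrier R" "x \<otimes>\<^bsub>Q\<^esub> a \<in> carrier R"
      using that JR KR by auto
    then have "x \<otimes>\<^bsub>Q\<^esub> (r \<otimes>\<^bsub>R\<^esub> a) = r \<otimes>\<^bsub>R\<^esub> (x \<otimes>\<^bsub>Q\<^esub> a)"
      using x that(1) by (simp add: Q.m_lcomm carrier_in_Q)
    then show ?thesis
      using that J K by (simp add: ideal.I_l_closed)
  qed
qed

lemma linear_form_mult:
  assumes f: "linear_form R M f" and x: "x \<in> carrier Q"
    and fx: "\<And>m. m \<in> carrier M \<Longrightarrow> x \<otimes>\<^bsub>Q\<^esub> f m \<in> carrier R"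
  shows "linear_form R M (\<lambda>m. x \<otimes>\<^bsub>Q\<^esub> f m)"
proof -
  have fR: "f m \<in> carrier R" if "m \<in> carrier M" for m
    using f that unfolding linear_form_def by blast
  show ?thesis
    unfolding linear_form_def
  proof (intro conjI ballI)
    show "(\<lambda>m. x \<otimes>\<^bsub>Q\<^esub> f m) \<in> carrier M \<rightarrow> carrier R"
      using fx by blast
    fix u v assume "u \<in> carrier M" "v \<in> carrier M"
    then show "x \<otimes>\<^bsub>Q\<^esub> f (u \<oplus>\<^bsub>M\<^esub> v) = x \<otimes>\<^bsub>Q\<^esub> f u \<oplus>\<^bsub>R\<^esub> x \<otimes>\<^bsub>Q\<^esub> f v"
      using f x fR fx unfolding linear_form_def by (simp add: Q.r_distr carrier_in_Q)
  next
    fix r u assume "r \<in> carrier R" "u \<in> carrier M"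
    then show "x \<otimes>\<^bsub>Q\<^esub> f (r \<odot>\<^bsub>M\<^esub> u) = r \<otimes>\<^bsub>R\<^esub> (x \<otimes>\<^bsub>Q\<^esub> f u)"
      using f x fR fx unfolding linear_form_def by (simp add: Q.m_lcomm carrier_in_Q)
  qed
qed

lemma trace_of_mult_closed:
  assumes x: "x \<in> carrier Q"
    and xR: "\<And>a. a \<in> trace_of R M \<Longrightarrow> x \<otimes>\<^bsub>Q\<^esub> a \<in> carrier R"
    and j: "j \<in> trace_of R M"
  shows "x \<otimes>\<^bsub>Q\<^esub> j \<in> trace_of R M"
proof -
  define G where "G = \<Union>{f ` carrier M | f. linear_form R M f}"
  have GR: "G \<subseteq> carrier R"
    unfolding G_def linear_form_def by blast
  have GJ: "G \<subseteq> trace_of R M"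
    using R.genideal_self[OF GR] unfolding trace_of_def G_def .
  have "G \<subseteq> {a \<in> trace_of R M. x \<otimes>\<^bsub>Q\<^esub> a \<in> trace_of R M}"
  proof
    fix y assume "y \<in> G"
    then obtain f m where f: "linear_form R M f" and m: "m \<in> carrier M" and y: "y = f m"
      unfolding G_def by blast
    have "f ` carrier M \<subseteq> trace_of R M"
      using f GJ unfolding G_def by blast
    then have "linear_form R M (\<lambda>m. x \<otimes>\<^bsub>Q\<^esub> f m)"
      using linear_form_mult[OF f x] xR by blast
    then have "x \<otimes>\<^bsub>Q\<^esub> y \<in> G"
      using m y unfolding G_def by blast
    then show "y \<in> {a \<in> trace_of R M. x \<otimes>\<^bsub>Q\<^esub> a \<in> trace_of R M}"
      using \<open>y \<in> G\<close> GJ by blast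
  qed
  then have "Idl\<^bsub>R\<^esub> G \<subseteq> {a \<in> trace_of R M. x \<otimes>\<^bsub>Q\<^esub> a \<in> trace_of R M}"
    by (rule R.genideal_minimal[OF ideal_mult_preimage[OF R.trace_of_ideal R.trace_of_ideal x]])
  then show ?thesis
    using j unfolding trace_of_def G_def by blast
qed

lemma ideal_subset_Q:
  assumes "ideal I R"
  shows "I \<subseteq> carrier Q"
  using assms carrier_subset by (meson ideal.axioms(1) additive_subgroup.a_subset order_trans)

lemma colonI:
  assumes "h \<in> carrier Q" "\<And>a. a \<in> I \<Longrightarrow> h \<otimes>\<^bsub>Q\<^esub> a \<in> I"
  shows "h \<in> colon Q I"
  using assms unfolding colon_def by blast

lemma colon_subset_Q: "colon Q I \<subseteq> carrier Q"
  unfolding colon_def by blast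

lemma colon_mult_left:
  assumes "x \<in> colon Q I" "a \<in> I"
  shows "x \<otimes>\<^bsub>Q\<^esub> a \<in> I"
  using assms unfolding colon_def by blast

lemma colon_mult_right:
  assumes "ideal I R" "x \<in> colon Q I" "a \<in> I"
  shows "a \<otimes>\<^bsub>Q\<^esub> x \<in> I"
proof -
  have "x \<in> carrier Q" "a \<in> carrier Q"
    using assms colon_subset_Q ideal_subset_Q[OF assms(1)] by auto
  then show ?thesis
    using colon_mult_left[OF assms(2,3)] by (simp add: Q.m_comm)
qed

lemma carrier_subset_colon:
  assumes I: "ideal I R"
  shows "carrier R \<subseteq> colon Q I"
proof
  fix r assume r: "r \<in> carrier R"
  have "r \<otimes>\<^bsub>Q\<^esub> a \<in> I" if "a \<in> I" for a
    using ideal.I_l_closed[OF I that r] r that I by (simp add: ideal.Icarr)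
  then show "r \<in> colon Q I"
    using r by (intro colonI) auto
qed

lemma colon_subring:
  assumes I: "ideal I R"
  shows "subring (colon Q I) Q"
proof (rule Q.subringI)
  have IR: "a \<in> carrier R" and IQ: "a \<in> carrier Q" if "a \<in> I" for a
    using ideal.Icarr[OF I that] ideal_subset_Q[OF I] that by auto
  have hQ: "h \<in> carrier Q" if "h \<in> colon Q I" for h
    using colon_subset_Q that by blast
  show "colon Q I \<subseteq> carrier Q" "\<one>\<^bsub>Q\<^esub> \<in> colon Q I"
    using colon_subset_Q carrier_subset_colon[OF I] R.one_closed by auto
  show "\<ominus>\<^bsub>Q\<^esub> h \<in> colon Q I" if h: "h \<in> colon Q I" for h
  proof (rule colonI)
    fix a assume a: "a \<in> I"
    have ha: "h \<otimes>\<^bsub>Q\<^esub> a \<in> I"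
      using colon_mult_left[OF h a] .
    have "(\<ominus>\<^bsub>Q\<^esub> h) \<otimes>\<^bsub>Q\<^esub> a = \<ominus>\<^bsub>Q\<^esub> (h \<otimes>\<^bsub>Q\<^esub> a)"
      using hQ[OF h] IQ[OF a] by (rule Q.l_minus)
    also have "\<dots> = \<ominus>\<^bsub>R\<^esub> (h \<otimes>\<^bsub>Q\<^esub> a)"
      using IR[OF ha] by (rule a_inv_eq[symmetric])
    finally show "(\<ominus>\<^bsub>Q\<^esub> h) \<otimes>\<^bsub>Q\<^esub> a \<in> I"
      using additive_subgroup.a_inv_closed[OF ideal.axioms(1)[OF I] ha] by (simp only:)
  qed (use hQ[OF h] in simp)
  show "h1 \<otimes>\<^bsub>Q\<^esub> h2 \<in> colon Q I" if h: "h1 \<in> colon Q I" "h2 \<in> colon Q I" for h1 h2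
  proof (rule colonI)
    fix a assume a: "a \<in> I"
    have "(h1 \<otimes>\<^bsub>Q\<^esub> h2) \<otimes>\<^bsub>Q\<^esub> a = h1 \<otimes>\<^bsub>Q\<^esub> (h2 \<otimes>\<^bsub>Q\<^esub> a)"
      using hQ[OF h(1)] hQ[OF h(2)] IQ[OF a] by (rule Q.m_assoc)
    then show "(h1 \<otimes>\<^bsub>Q\<^esub> h2) \<otimes>\<^bsub>Q\<^esub> a \<in> I"
      using colon_mult_left[OF h(1) colon_mult_left[OF h(2) a]] by (simp only:)
  qed (use hQ h in simp)
  show "h1 \<oplus>\<^bsub>Q\<^esub> h2 \<in> colon Q I" if h: "h1 \<in> colon Q I" "h2 \<in> colon Q I" for h1 h2
  proof (rule colonI)
    fix a assume a: "a \<in> I"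
    have ha: "h1 \<otimes>\<^bsub>Q\<^esub> a \<in> I" "h2 \<otimes>\<^bsub>Q\<^esub> a \<in> I"
      using colon_mult_left[OF h(1) a] colon_mult_left[OF h(2) a] .
    have "(h1 \<oplus>\<^bsub>Q\<^esub> h2) \<otimes>\<^bsub>Q\<^esub> a = h1 \<otimes>\<^bsub>Q\<^esub> a \<oplus>\<^bsub>Q\<^esub> h2 \<otimes>\<^bsub>Q\<^esub> a"
      using hQ[OF h(1)] hQ[OF h(2)] IQ[OF a] by (rule Q.l_distr)
    also have "\<dots> = h1 \<otimes>\<^bsub>Q\<^esub> a \<oplus>\<^bsub>R\<^esub> h2 \<otimes>\<^bsub>Q\<^esub> a"
      using IR[OF ha(1)] IR[OF ha(2)] by (rule add_eq[symmetric])
    finally show "(h1 \<oplus>\<^bsub>Q\<^esub> h2) \<otimes>\<^bsub>Q\<^esub> a \<in> I"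
      using additive_subgroup.a_closed[OF ideal.axioms(1)[OF I] ha] by (simp only:)
  qed (use hQ h in simp)
qed

lemma colon_cring:
  assumes "ideal I R"
  shows "cring (Q\<lparr>carrier := colon Q I\<rparr>)"
  using Q.subcring_iff[OF colon_subset_Q] Q.subcringI'[OF colon_subring[OF assms]] by blast

lemma colon_mult_trace_of:
  assumes I: "ideal I R" and J: "trace_of R M \<subseteq> I"
    and s: "s \<in> colon Q I" and j: "j \<in> trace_of R M"
  shows "s \<otimes>\<^bsub>Q\<^esub> j \<in> trace_of R M"
proof (rule trace_of_mult_closed[OF _ _ j])
  show "s \<in> carrier Q"
    using s colon_subset_Q by blast
  show "s \<otimes>\<^bsub>Q\<^esub> a \<in> carrier R" if "a \<in> trace_of R M" for a
    using ideal.Icarr[OF I colon_mult_left[OF s]] J that by blast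
qed

lemma ideal_mult_image_colon:
  assumes I: "ideal I R" and N: "ideal N (Q\<lparr>carrier := colon Q I\<rparr>)" and y: "y \<in> I"
  shows "ideal ((\<lambda>n. y \<otimes>\<^bsub>Q\<^esub> n) ` N) R"
proof (rule cring_idealI[OF R.is_cring])
  have N_colon: "N \<subseteq> colon Q I"
    using ideal.Icarr[OF N] by force
  have NQ: "n \<in> carrier Q" if "n \<in> N" for n
    using that N_colon colon_subset_Q by blast
  have yQ: "y \<in> carrier Q"
    using ideal_subset_Q[OF I] y by blast
  have ynR: "y \<otimes>\<^bsub>Q\<^esub> n \<in> carrier R" if "n \<in> N" for n
    using ideal.Icarr[OF I colon_mult_right[OF I _ y]] N_colon that by blast
  then show "(\<lambda>n. y \<otimes>\<^bsub>Q\<^esub> n) ` N \<subseteq> carrier R"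
    by blast
  have "\<zero>\<^bsub>Q\<^esub> \<in> N"
    using additive_subgroup.zero_closed[OF ideal.axioms(1)[OF N]] by simp
  then show "\<zero>\<^bsub>R\<^esub> \<in> (\<lambda>n. y \<otimes>\<^bsub>Q\<^esub> n) ` N"
    using yQ by (force simp: image_iff)
  show "a \<oplus>\<^bsub>R\<^esub> b \<in> (\<lambda>n. y \<otimes>\<^bsub>Q\<^esub> n) ` N"
    if ab: "a \<in> (\<lambda>n. y \<otimes>\<^bsub>Q\<^esub> n) ` N" "b \<in> (\<lambda>n. y \<otimes>\<^bsub>Q\<^esub> n) ` N" for a b
  proof -
    obtain n1 n2 where n: "n1 \<in> N" "n2 \<in> N" "a = y \<otimes>\<^bsub>Q\<^esub> n1" "b = y \<otimes>\<^bsub>Q\<^esub> n2"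
      using ab by blast
    have "a \<oplus>\<^bsub>R\<^esub> b = y \<otimes>\<^bsub>Q\<^esub> (n1 \<oplus>\<^bsub>Q\<^esub> n2)"
      using n ynR NQ yQ by (simp add: Q.r_distr)
    moreover have "n1 \<oplus>\<^bsub>Q\<^esub> n2 \<in> N"
      using additive_subgroup.a_closed[OF ideal.axioms(1)[OF N] n(1,2)] by simp
    ultimately show ?thesis
      by blast
  qed
  show "r \<otimes>\<^bsub>R\<^esub> a \<in> (\<lambda>n. y \<otimes>\<^bsub>Q\<^esub> n) ` N"
    if r: "r \<in> carrier R" and a: "a \<in> (\<lambda>n. y \<otimes>\<^bsub>Q\<^esub> n) ` N" for r a
  proof -
    obtain n where n: "n \<in> N" "a = y \<otimes>\<^bsub>Q\<^esub> n"
      using a by blast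
    have "r \<otimes>\<^bsub>R\<^esub> a = y \<otimes>\<^bsub>Q\<^esub> (r \<otimes>\<^bsub>Q\<^esub> n)"
      using n r ynR NQ yQ by (simp add: Q.m_lcomm carrier_in_Q)
    moreover have "r \<otimes>\<^bsub>Q\<^esub> n \<in> N"
      using ideal.I_l_closed[OF N n(1)] carrier_subset_colon[OF I] r by auto
    ultimately show ?thesis
      by blast
  qed
qed

lemma inv_mult_in_colon:
  assumes I: "ideal I R" and J: "ideal J R" "J \<subseteq> I"
    and q: "q \<in> carrier R" "q \<in> Units Q"
    and IJ: "I \<cdot>\<^bsub>R\<^esub> J \<subseteq> (\<lambda>j. q \<otimes>\<^bsub>R\<^esub> j) ` J"
    and j: "j \<in> J"
  shows "inv\<^bsub>Q\<^esub> q \<otimes>\<^bsub>Q\<^esub> j \<in> colon Q I"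
proof (rule colonI)
  have jR: "j \<in> carrier R"
    using ideal.Icarr[OF J(1) j] .
  then show "inv\<^bsub>Q\<^esub> q \<otimes>\<^bsub>Q\<^esub> j \<in> carrier Q"
    using q(2) by auto
  fix a assume a: "a \<in> I"
  obtain j' where j': "j' \<in> J" "a \<otimes>\<^bsub>R\<^esub> j = q \<otimes>\<^bsub>R\<^esub> j'"
    using ideal_prod.prod[OF a j] IJ by blast
  have j'R: "j' \<in> carrier R"
    using ideal.Icarr[OF J(1) j'(1)] .
  have aR: "a \<in> carrier R"
    using ideal.Icarr[OF I a] .
  have "(inv\<^bsub>Q\<^esub> q \<otimes>\<^bsub>Q\<^esub> j) \<otimes>\<^bsub>Q\<^esub> a = inv\<^bsub>Q\<^esub> q \<otimes>\<^bsub>Q\<^esub> (a \<otimes>\<^bsub>Q\<^esub> j)"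
    using carrier_in_Q[OF jR] carrier_in_Q[OF aR] q(2) by (simp add: Q.m_ac)
  also have "\<dots> = inv\<^bsub>Q\<^esub> q \<otimes>\<^bsub>Q\<^esub> (q \<otimes>\<^bsub>Q\<^esub> j')"
    using j'(2) aR jR j'R q(1) by simp
  also have "\<dots> = j'"
    using carrier_in_Q[OF j'R] q(2) by (simp add: Q.m_assoc[symmetric] Q.Units_closed)
  finally show "(inv\<^bsub>Q\<^esub> q \<otimes>\<^bsub>Q\<^esub> j) \<otimes>\<^bsub>Q\<^esub> a \<in> I"
    using j'(1) J(2) by auto
qed

lemma ideal_inv_mult_image_colon:
  assumes I: "ideal I R" and J: "J = trace_of R M" "J \<subseteq> I"
    and q: "q \<in> carrier R" "q \<in> Units Q"
    and IJ: "I \<cdot>\<^bsub>R\<^esub> J \<subseteq> (\<lambda>j. q \<otimes>\<^bsub>R\<^esub> j) ` J"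
  shows "ideal ((\<lambda>j. inv\<^bsub>Q\<^esub> q \<otimes>\<^bsub>Q\<^esub> j) ` J) (Q\<lparr>carrier := colon Q I\<rparr>)"
proof (rule cring_idealI[OF colon_cring[OF I]])
  let ?qi = "inv\<^bsub>Q\<^esub> q"
  have J_ideal: "ideal J R"
    unfolding J(1) by (rule R.trace_of_ideal)
  have jR: "j \<in> carrier R" if "j \<in> J" for j
    using ideal.Icarr[OF J_ideal that] .
  have qiQ: "?qi \<in> carrier Q"
    using q(2) by simp
  show "(\<lambda>j. ?qi \<otimes>\<^bsub>Q\<^esub> j) ` J \<subseteq> carrier (Q\<lparr>carrier := colon Q I\<rparr>)"
    using inv_mult_in_colon[OF I J_ideal J(2) q IJ] by auto
  have "\<zero>\<^bsub>R\<^esub> \<in> J"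
    using additive_subgroup.zero_closed[OF ideal.axioms(1)[OF J_ideal]] .
  then show "\<zero>\<^bsub>Q\<lparr>carrier := colon Q I\<rparr>\<^esub> \<in> (\<lambda>j. ?qi \<otimes>\<^bsub>Q\<^esub> j) ` J"
    using qiQ by (force simp: image_iff)
  show "a \<oplus>\<^bsub>Q\<lparr>carrier := colon Q I\<rparr>\<^esub> b \<in> (\<lambda>j. ?qi \<otimes>\<^bsub>Q\<^esub> j) ` J"
    if ab: "a \<in> (\<lambda>j. ?qi \<otimes>\<^bsub>Q\<^esub> j) ` J" "b \<in> (\<lambda>j. ?qi \<otimes>\<^bsub>Q\<^esub> j) ` J" for a b
  proof -
    obtain j1 j2 where j: "j1 \<in> J" "j2 \<in> J" "a = ?qi \<otimes>\<^bsub>Q\<^esub> j1" "b = ?qi \<otimes>\<^bsub>Q\<^esub> j2"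
      using ab by blast
    have "a \<oplus>\<^bsub>Q\<^esub> b = ?qi \<otimes>\<^bsub>Q\<^esub> (j1 \<oplus>\<^bsub>R\<^esub> j2)"
      using jR[OF j(1)] jR[OF j(2)] j(3,4) qiQ by (simp add: Q.r_distr carrier_in_Q)
    moreover have "j1 \<oplus>\<^bsub>R\<^esub> j2 \<in> J"
      using additive_subgroup.a_closed[OF ideal.axioms(1)[OF J_ideal] j(1,2)] .
    ultimately show ?thesis
      by auto
  qed
  show "s \<otimes>\<^bsub>Q\<lparr>carrier := colon Q I\<rparr>\<^esub> a \<in> (\<lambda>j. ?qi \<otimes>\<^bsub>Q\<^esub> j) ` J"
    if s: "s \<in> carrier (Q\<lparr>carrier := colon Q I\<rparr>)" and a: "a \<in> (\<lambda>j. ?qi \<otimes>\<^bsub>Q\<^esub> j) ` J" for s a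
  proof -
    obtain j where j: "j \<in> J" "a = ?qi \<otimes>\<^bsub>Q\<^esub> j"
      using a by blast
    have "s \<otimes>\<^bsub>Q\<^esub> a = ?qi \<otimes>\<^bsub>Q\<^esub> (s \<otimes>\<^bsub>Q\<^esub> j)"
      using j carrier_in_Q[OF jR[OF j(1)]] s colon_subset_Q[of I] qiQ by (auto simp: Q.m_lcomm)
    then show ?thesis
      using colon_mult_trace_of[OF I _ _ j(1)[unfolded J(1)]] J s by auto
  qed
qed

lemma ideal_prod_self_eq_mult_if_colon:
  assumes I: "ideal I R" and q: "q \<in> I" and I_q: "I \<subseteq> (\<lambda>x. q \<otimes>\<^bsub>Q\<^esub> x) ` colon Q I"
  shows "I \<cdot>\<^bsub>R\<^esub> I = (\<lambda>a. q \<otimes>\<^bsub>R\<^esub> a) ` I"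
proof
  have IR: "a \<in> carrier R" if "a \<in> I" for a
    using ideal.Icarr[OF I that] .
  show "I \<cdot>\<^bsub>R\<^esub> I \<subseteq> (\<lambda>a. q \<otimes>\<^bsub>R\<^esub> a) ` I"
  proof
    fix x assume "x \<in> I \<cdot>\<^bsub>R\<^esub> I"
    then show "x \<in> (\<lambda>a. q \<otimes>\<^bsub>R\<^esub> a) ` I"
    proof (induction x rule: ideal_prod.induct)
      case (prod i j)
      then obtain y where y: "y \<in> colon Q I" "i = q \<otimes>\<^bsub>Q\<^esub> y"
        using I_q by blast
      have yj: "y \<otimes>\<^bsub>Q\<^esub> j \<in> I"
        using colon_mult_left[OF y(1) prod(2)] .
      have "i \<otimes>\<^bsub>R\<^esub> j = (q \<otimes>\<^bsub>Q\<^esub> y) \<otimes>\<^bsub>Q\<^esub> j"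
        using IR[OF prod(1)] IR[OF prod(2)] y(2) by simp
      also have "\<dots> = q \<otimes>\<^bsub>Q\<^esub> (y \<otimes>\<^bsub>Q\<^esub> j)"
        using carrier_in_Q[OF IR[OF q]] subsetD[OF colon_subset_Q y(1)] carrier_in_Q[OF IR[OF prod(2)]]
        by (rule Q.m_assoc)
      also have "\<dots> = q \<otimes>\<^bsub>R\<^esub> (y \<otimes>\<^bsub>Q\<^esub> j)"
        using IR[OF q] IR[OF yj] by simp
      finally have "i \<otimes>\<^bsub>R\<^esub> j = q \<otimes>\<^bsub>R\<^esub> (y \<otimes>\<^bsub>Q\<^esub> j)" .
      then show ?case
        using yj by blast
    next
      case (sum s1 s2)
      then obtain a1 a2 where a: "a1 \<in> I" "a2 \<in> I" "s1 = q \<otimes>\<^bsub>R\<^esub> a1" "s2 = q \<otimes>\<^bsub>R\<^esub> a2"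
        by blast
      then have "s1 \<oplus>\<^bsub>R\<^esub> s2 = q \<otimes>\<^bsub>R\<^esub> (a1 \<oplus>\<^bsub>R\<^esub> a2)"
        using R.r_distr[OF IR[OF a(1)] IR[OF a(2)] IR[OF q]] by (simp only:)
      moreover have "a1 \<oplus>\<^bsub>R\<^esub> a2 \<in> I"
        using additive_subgroup.a_closed[OF ideal.axioms(1)[OF I] a(1,2)] .
      ultimately show ?case
        by blast
    qed
  qed
  show "(\<lambda>a. q \<otimes>\<^bsub>R\<^esub> a) ` I \<subseteq> I \<cdot>\<^bsub>R\<^esub> I"
    using q by (auto intro: ideal_prod.prod)
qed

lemma mult_image_colon_psubset:
  assumes I: "ideal I R" and q: "q \<in> I" and II: "I \<cdot>\<^bsub>R\<^esub> I \<noteq> (\<lambda>a. q \<otimes>\<^bsub>R\<^esub> a) ` I"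
  shows "(\<lambda>x. q \<otimes>\<^bsub>Q\<^esub> x) ` colon Q I \<subset> I"
  using colon_mult_right[OF I _ q] ideal_prod_self_eq_mult_if_colon[OF I q] II by blast

lemma maximalideal_colon:
  assumes I: "ideal I R" and J: "J = trace_of R M" "J \<subseteq> I"
    and len: "quotient_length_eq R I J 2"
    and q: "q \<in> I - J" "q \<in> Units Q"
    and IJ: "I \<cdot>\<^bsub>R\<^esub> J \<subseteq> (\<lambda>j. q \<otimes>\<^bsub>R\<^esub> j) ` J"
    and II: "I \<cdot>\<^bsub>R\<^esub> I \<noteq> (\<lambda>a. q \<otimes>\<^bsub>R\<^esub> a) ` I"
  shows "maximalideal ((\<lambda>j. inv\<^bsub>Q\<^esub> q \<otimes>\<^bsub>Q\<^esub> j) ` J) (Q\<lparr>carrier := colon Q I\<rparr>)"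
    (is "maximalideal ?M ?S")
proof (rule maximalidealI)
  let ?mult_q = "\<lambda>x. q \<otimes>\<^bsub>Q\<^esub> x"
  have qI: "q \<in> I"
    using q(1) by blast
  have qR: "q \<in> carrier R"
    using ideal.Icarr[OF I qI] .
  show "ideal ?M ?S"
    using ideal_inv_mult_image_colon[OF I J qR q(2) IJ] .
  have qM: "?mult_q ` ?M = J"
    using Q.image_mult_inv_mult_Units[OF q(2) subset_trans[OF J(2) ideal_subset_Q[OF I]]] .
  show "carrier ?S \<noteq> ?M"
  proof
    assume "carrier ?S = ?M"
    moreover have "\<one>\<^bsub>Q\<^esub> \<in> carrier ?S"
      using carrier_subset_colon[OF I] R.one_closed by auto
    ultimately have "q \<otimes>\<^bsub>Q\<^esub> \<one>\<^bsub>Q\<^esub> \<in> J"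
      using qM by blast
    then show False
      using q(1) carrier_in_Q[OF qR] by simp
  qed
  fix N assume N: "ideal N ?S" "?M \<subseteq> N" "N \<subseteq> carrier ?S"
  show "N = ?M \<or> N = carrier ?S"
  proof (rule ccontr)
    assume "\<not> (N = ?M \<or> N = carrier ?S)"
    then have MN: "?M \<subset> N" and NS: "N \<subset> colon Q I"
      using N(2,3) by auto
    have inj: "inj_on ?mult_q (colon Q I)"
      using q(2) colon_subset_Q[of I] by (intro inj_onI) (metis Q.Units_l_cancel subsetD)
    have "J \<subset> ?mult_q ` N"
      using image_strict_mono[OF inj_on_subset[OF inj psubset_imp_subset[OF NS]] MN] qM by simp
    moreover have "?mult_q ` N \<subset> ?mult_q ` colon Q I"
      using image_strict_mono[OF inj NS] .
    moreover have "ideal (?mult_q ` colon Q I) R"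
      using ideal_mult_image_colon[OF I ring.oneideal[OF cring.axioms(1)[OF colon_cring[OF I]]] qI]
      by simp
    ultimately show False
      using R.quotient_length_eq_two_no_chain[OF len ideal_mult_image_colon[OF I N(1) qI]]
        mult_image_colon_psubset[OF I qI II] by blast
  qed
qed

end

lemma max_ideal_eqI:
  assumes "local_ring R" "maximalideal m R"
  shows "max_ideal R = m"
  using assms unfolding local_ring_def max_ideal_def by (metis the1_equality)

theorem lemma2p7:
  fixes R :: "('a, 'b) ring_scheme" and Q :: "('a, 'c) ring_scheme"
    and I J :: "'a set" and q :: 'a
    and MI :: "('a, 'm1) module" and MJ :: "('a, 'm2) module"
  assumes CM: "cohen_macaulay_local R" and dim1: "krull_dim_eq R 1"
    and QR: "total_ring_of_fractions R Q"
    and regI: "regular_ideal R I" and regJ: "regular_ideal R J"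
    and trI: "module R MI" "I = trace_of R MI"
    and trJ: "module R MJ" "J = trace_of R MJ"
    and JI: "J \<subseteq> I" and len: "quotient_length_eq R I J 2"
    and loc: "local_ring (Q\<lparr>carrier := colon Q I\<rparr>)"
    and q: "q \<in> I - J"
    and IJ: "I \<cdot>\<^bsub>R\<^esub> J = (\<lambda>j. q \<otimes>\<^bsub>R\<^esub> j) ` J"
    and II: "I \<cdot>\<^bsub>R\<^esub> I \<noteq> (\<lambda>a. q \<otimes>\<^bsub>R\<^esub> a) ` I"
  shows "max_ideal (Q\<lparr>carrier := colon Q I\<rparr>) = (\<lambda>j. inv\<^bsub>Q\<^esub> q \<otimes>\<^bsub>Q\<^esub> j) ` J"
proof -
  have R: "cring R"
    using CM unfolding cohen_macaulay_local_def local_ring_def by blast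
  interpret ring_extension R Q
    using total_ring_of_fractions_ring_extension[OF R QR] .
  have I: "ideal I R"
    using regI unfolding regular_ideal_def by blast
  have "nzd R q"
    using nzd_if_ideal_prod_subset[OF R regI regJ _ equalityD1[OF IJ]] q ideal.Icarr[OF I] by blast
  then have "q \<in> Units Q"
    using QR unfolding total_ring_of_fractions_def by blast
  then have "maximalideal ((\<lambda>j. inv\<^bsub>Q\<^esub> q \<otimes>\<^bsub>Q\<^esub> j) ` J) (Q\<lparr>carrier := colon Q I\<rparr>)"
    using maximalideal_colon[OF I trJ(2) JI len q _ equalityD1[OF IJ] II] by blast
  with loc show ?thesis
    by (rule max_ideal_eqI)
qed

end
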